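(* Fix $\alpha\in(0,\tfrac12)$ and run Algorithm 2 (described in the context) with parameter $\alpha$ on any instance of dynamic bin packing with $n$ items. Then the algorithm makes at most $\frac{4\alpha}{1-2\alpha}\cdot n$ migrations.
   Context: Dynamic bin packing: bins have capacity $1$; items arrive online at times $a_i\ge0$ with size $s_i\in[0,1]$ and (unknown at arrival) duration $d_i>0$, and depart at $a_i+d_i$. The load of a bin is the total size of its items; a bin is open while nonempty. A migration is a move of one already placed item to a different bin. FirstFit with a given ordering of bins places an item into the first bin in the order with enough remaining capacity, or opens a new bin. Algorithm 1 (parameters $\alpha, f$): each bin is labeled Bad or Good. When an item $i$ of size $s_i$ arrives: if there is a Bad bin with load $\le 1-s_i$, put $i$ there, and if its load becomes $\ge f$ relabel it Good; otherwise, if there is a Good bin with load $\le1-s_i$, put $i$ into any such bin; otherwise open a new bin for $i$, labeled Bad if its load is $<f$ and Good otherwise. When an item departs: if its bin was Good and now has load $<\alpha$, migrate all items remaining in that bin using FirstFit with bins ordered Bad bins, then Good bins, then new bins. Algorithm 2 (parameter $\alpha$): an item has class $c\in\{0,1,2,\dots\}$ if its size lies in $(2^{-(c+1)},2^{-c}]$. Initialize a guess $\tilde\rho=1$, an instance of Algorithm 1 for class $0$ with parameters $(\alpha,\tfrac12)$, and one junk bin. For each arriving item: if the current number of items in the system is $\ge\tilde\rho$, double $\tilde\rho$, initialize a new instance of Algorithm 1 for class $c=\log_2\tilde\rho$ with parameters $(\alpha,1-2^{-c})$, and open a new junk bin for this guess. Then, if the item's class $c$ satisfies $c<\log_2\tilde\rho$,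 assign it using the Algorithm 1 instance for class $c$ (each instance uses its own bins); otherwise assign it to the junk bin of the current guess $\tilde\rho$. *)

theory Defs
  imports Complex_Main
begin

(* Items are the natural numbers 0..<n.  Bins are identified by natural numbers. *)

datatype label = Bad | Good

(* Bookkeeping of a bin id: never opened, a junk bin, or a bin of the
   Algorithm 1 instance for class c with its current label. *)
datatype binfo = Unused | Junk | Inst nat label

datatype event = Arr nat | Dep nat

(* kk: log2 of the guess rho~ ; loc: bin of each item currently in the system;
   bins: bookkeeping of bin ids; junkb: junk bin of the current guess;
   migs: number of migrations performed so far *)
record state =
  kk :: nat
  loc :: "nat \<Rightarrow> nat option"
  bins :: "nat \<Rightarrow> binfo"
  junkb :: nat
  migs :: nat

definition load :: "(nat \<Rightarrow> real) \<Rightarrow> nat \<Rightarrow> (nat \<Rightarrow> nat option) \<Rightarrow> nat \<Rightarrow> real" where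
  "load s n L b = (\<Sum>j | j < n \<and> L j = Some b. s j)"

definition isopen :: "nat \<Rightarrow> (nat \<Rightarrow> nat option) \<Rightarrow> nat \<Rightarrow> bool" where
  "isopen n L b \<longleftrightarrow> (\<exists>j<n. L j = Some b)"

definition fpar :: "nat \<Rightarrow> real" where
  "fpar c = (if c = 0 then 1/2 else 1 - 1/2^c)"

definition item_class :: "real \<Rightarrow> nat \<Rightarrow> bool" where
  "item_class x c \<longleftrightarrow> 1/2^(Suc c) < x \<and> x \<le> 1/2^c"

(* Algorithm 1 (instance for class c, threshold f): placement of an arriving item i *)
inductive alg1_arrive ::
  "real \<Rightarrow> nat \<Rightarrow> (nat \<Rightarrow> real) \<Rightarrow> nat \<Rightarrow> (nat \<Rightarrow> binfo) \<Rightarrow> (nat \<Rightarrow> nat option) \<Rightarrow> nat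
   \<Rightarrow> (nat \<Rightarrow> binfo) \<Rightarrow> (nat \<Rightarrow> nat option) \<Rightarrow> bool"
  for f c s n where
  to_bad: "B b = Inst c Bad \<Longrightarrow> isopen n L b \<Longrightarrow> load s n L b \<le> 1 - s i \<Longrightarrow>
    alg1_arrive f c s n B L i
      (B(b := Inst c (if f \<le> load s n (L(i := Some b)) b then Good else Bad))) (L(i := Some b))"
| to_good: "\<not> (\<exists>b'. B b' = Inst c Bad \<and> isopen n L b' \<and> load s n L b' \<le> 1 - s i) \<Longrightarrow>
    B b = Inst c Good \<Longrightarrow> isopen n L b \<Longrightarrow> load s n L b \<le> 1 - s i \<Longrightarrow>
    alg1_arrive f c s n B L i B (L(i := Some b))"
| to_new: "\<not> (\<exists>b'. B b' = Inst c Bad \<and> isopen n L b' \<and> load s n L b' \<le> 1 - s i) \<Longrightarrow>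
    \<not> (\<exists>b'. B b' = Inst c Good \<and> isopen n L b' \<and> load s n L b' \<le> 1 - s i) \<Longrightarrow>
    B b = Unused \<Longrightarrow>
    alg1_arrive f c s n B L i (B(b := Inst c (if f \<le> s i then Good else Bad))) (L(i := Some b))"

(* FirstFit migration of the items js (in this order) w.r.t. the bin order ord;
   newly opened bins are appended to the order.  Labels are maintained as on arrival. *)
inductive firstfit ::
  "real \<Rightarrow> nat \<Rightarrow> (nat \<Rightarrow> real) \<Rightarrow> nat \<Rightarrow> nat list \<Rightarrow> nat list \<Rightarrow> (nat \<Rightarrow> binfo) \<Rightarrow> (nat \<Rightarrow> nat option)
   \<Rightarrow> (nat \<Rightarrow> binfo) \<Rightarrow> (nat \<Rightarrow> nat option) \<Rightarrow> bool"
  for f c s n where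
  ff_done: "firstfit f c s n ord [] B L B L"
| ff_fit: "ord = pre @ b # post \<Longrightarrow> (\<forall>b'\<in>set pre. \<not> load s n L b' \<le> 1 - s j) \<Longrightarrow>
    load s n L b \<le> 1 - s j \<Longrightarrow> L' = L(j := Some b) \<Longrightarrow>
    B' = B(b := (if B b = Inst c Bad \<and> f \<le> load s n L' b then Inst c Good else B b)) \<Longrightarrow>
    firstfit f c s n ord js B' L' B'' L'' \<Longrightarrow>
    firstfit f c s n ord (j # js) B L B'' L''"
| ff_new: "(\<forall>b'\<in>set ord. \<not> load s n L b' \<le> 1 - s j) \<Longrightarrow> B b = Unused \<Longrightarrow>
    L' = L(j := Some b) \<Longrightarrow> B' = B(b := Inst c (if f \<le> s j then Good else Bad)) \<Longrightarrow>
    firstfit f c s n (ord @ [b]) js B' L' B'' L'' \<Longrightarrow>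
    firstfit f c s n ord (j # js) B L B'' L''"

(* Algorithm 1 (parameters alpha, f, instance for class c): departure of item i;
   the last argument is the number of migrations performed *)
inductive alg1_depart ::
  "real \<Rightarrow> real \<Rightarrow> nat \<Rightarrow> (nat \<Rightarrow> real) \<Rightarrow> nat \<Rightarrow> (nat \<Rightarrow> binfo) \<Rightarrow> (nat \<Rightarrow> nat option) \<Rightarrow> nat
   \<Rightarrow> (nat \<Rightarrow> binfo) \<Rightarrow> (nat \<Rightarrow> nat option) \<Rightarrow> nat \<Rightarrow> bool"
  for \<alpha> f c s n where
  dep_plain: "L i = Some b \<Longrightarrow> \<not> (B b = Inst c Good \<and> load s n (L(i := None)) b < \<alpha>) \<Longrightarrow>
    alg1_depart \<alpha> f c s n B L i B (L(i := None)) 0"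
| dep_migrate: "L i = Some b \<Longrightarrow> L1 = L(i := None) \<Longrightarrow>
    B b = Inst c Good \<Longrightarrow> load s n L1 b < \<alpha> \<Longrightarrow>
    distinct (bads @ goods) \<Longrightarrow>
    set bads = {b'. b' \<noteq> b \<and> isopen n L1 b' \<and> B b' = Inst c Bad} \<Longrightarrow>
    set goods = {b'. b' \<noteq> b \<and> isopen n L1 b' \<and> B b' = Inst c Good} \<Longrightarrow>
    distinct js \<Longrightarrow> set js = {j. j < n \<and> L1 j = Some b} \<Longrightarrow>
    firstfit f c s n (bads @ goods) js B L1 B' L' \<Longrightarrow>
    alg1_depart \<alpha> f c s n B L i B' L' (length js)"

(* update of the guess rho~ = 2^kk before an arrival *)
inductive guess_upd :: "nat \<Rightarrow> state \<Rightarrow> state \<Rightarrow> bool" for n where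
  keep: "card {j. j < n \<and> loc \<sigma> j \<noteq> None} < 2 ^ kk \<sigma> \<Longrightarrow> guess_upd n \<sigma> \<sigma>"
| double: "card {j. j < n \<and> loc \<sigma> j \<noteq> None} \<ge> 2 ^ kk \<sigma> \<Longrightarrow> bins \<sigma> jb = Unused \<Longrightarrow>
    guess_upd n \<sigma> (\<sigma>\<lparr>kk := Suc (kk \<sigma>), bins := (bins \<sigma>)(jb := Junk), junkb := jb\<rparr>)"

inductive alg2_step :: "real \<Rightarrow> (nat \<Rightarrow> real) \<Rightarrow> nat \<Rightarrow> state \<Rightarrow> event \<Rightarrow> state \<Rightarrow> bool"
  for \<alpha> s n where
  arr_inst: "i < n \<Longrightarrow> loc \<sigma> i = None \<Longrightarrow> guess_upd n \<sigma> \<sigma>1 \<Longrightarrow>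
    item_class (s i) c \<Longrightarrow> c < kk \<sigma>1 \<Longrightarrow>
    alg1_arrive (fpar c) c s n (bins \<sigma>1) (loc \<sigma>1) i B' L' \<Longrightarrow>
    alg2_step \<alpha> s n \<sigma> (Arr i) (\<sigma>1\<lparr>bins := B', loc := L'\<rparr>)"
| arr_junk: "i < n \<Longrightarrow> loc \<sigma> i = None \<Longrightarrow> guess_upd n \<sigma> \<sigma>1 \<Longrightarrow>
    \<not> (\<exists>c. item_class (s i) c \<and> c < kk \<sigma>1) \<Longrightarrow>
    alg2_step \<alpha> s n \<sigma> (Arr i) (\<sigma>1\<lparr>loc := (loc \<sigma>1)(i := Some (junkb \<sigma>1))\<rparr>)"
| dep_inst: "loc \<sigma> i = Some b \<Longrightarrow> bins \<sigma> b = Inst c l \<Longrightarrow>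
    alg1_depart \<alpha> (fpar c) c s n (bins \<sigma>) (loc \<sigma>) i B' L' m \<Longrightarrow>
    alg2_step \<alpha> s n \<sigma> (Dep i) (\<sigma>\<lparr>bins := B', loc := L', migs := migs \<sigma> + m\<rparr>)"
| dep_junk: "loc \<sigma> i = Some b \<Longrightarrow> bins \<sigma> b = Junk \<Longrightarrow>
    alg2_step \<alpha> s n \<sigma> (Dep i) (\<sigma>\<lparr>loc := (loc \<sigma>)(i := None)\<rparr>)"

inductive alg2_run :: "real \<Rightarrow> (nat \<Rightarrow> real) \<Rightarrow> nat \<Rightarrow> state \<Rightarrow> event list \<Rightarrow> state \<Rightarrow> bool"
  for \<alpha> s n where
  run_nil: "alg2_run \<alpha> s n \<sigma> [] \<sigma>"
| run_cons: "alg2_step \<alpha> s n \<sigma> e \<sigma>1 \<Longrightarrow> alg2_run \<alpha> s n \<sigma>1 es \<sigma>2 \<Longrightarrow> alg2_run \<alpha> s n \<sigma> (e # es) \<sigma>2"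

definition alg2_init :: state where
  "alg2_init = \<lparr>kk = 0, loc = (\<lambda>_. None), bins = (\<lambda>_. Unused)(0 := Junk), junkb = 0, migs = 0\<rparr>"

definition ev_time :: "(nat \<Rightarrow> real) \<Rightarrow> (nat \<Rightarrow> real) \<Rightarrow> event \<Rightarrow> real" where
  "ev_time a d e = (case e of Arr i \<Rightarrow> a i | Dep i \<Rightarrow> a i + d i)"

(* the event sequence of the instance: every arrival and departure exactly once, in
   chronological order (simultaneous events in arbitrary order) *)
definition valid_order :: "nat \<Rightarrow> (nat \<Rightarrow> real) \<Rightarrow> (nat \<Rightarrow> real) \<Rightarrow> event list \<Rightarrow> bool" where
  "valid_order n a d evs \<longleftrightarrow> distinct evs \<and> set evs = Arr ` {..<n} \<union> Dep ` {..<n}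
     \<and> sorted (map (ev_time a d) evs)"

end

theory Submission
  imports Defs
begin

text \<open>
  The proof is an amortized analysis with the potential
  \<open>\<Phi> = \<Sum> max 0 (2^c * (f\<^sub>c - load))\<close>, summed over the open Good bins, \<open>c\<close> being the class
  of the bin. Arrivals and FirstFit placements never increase \<open>\<Phi>\<close>: a Bad bin becomes Good only
  when its load reaches \<open>f\<^sub>c\<close>, and adding items to a Good bin only lowers its deficit. A departure
  of an item of class \<open>c\<close> raises \<open>\<Phi>\<close> by at most \<open>2^c * s\<^sub>i \<le> 1\<close>. When a Good bin of class \<open>c\<close>
  falls below load \<open>\<alpha>\<close>, it holds at most \<open>2^(c+1) * \<alpha>\<close> items, all of which migrate, while its
  potential, at least \<open>2^c * (1/2 - \<alpha>) - 1\<close>, is released as the bin closes. With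
  \<open>K = 4\<alpha> / (1 - 2\<alpha>)\<close> we have \<open>2^(c+1) * \<alpha> = K * 2^c * (1/2 - \<alpha>)\<close>, so
  \<open>migrations + K * \<Phi>\<close> grows by at most \<open>K\<close> per departure, and there are at most \<open>n\<close> departures.
\<close>

lemma finite_open_bins: "finite {x. isopen n L x}"
proof -
  have "{x. isopen n L x} \<subseteq> (\<lambda>j. the (L j)) ` {..<n}"
    by (force simp: isopen_def)
  then show ?thesis
    by (rule finite_subset) simp
qed

lemma load_not_open: "\<not> isopen n L x \<Longrightarrow> load s n L x = 0"
  unfolding isopen_def load_def by (metis (mono_tags, lifting) empty_Collect_eq sum.empty)

lemma load_fun_upd:
  assumes "j < n"
  shows "load s n (L(j := v)) x
    = load s n L x - (if L j = Some x then s j else 0) + (if v = Some x then s j else 0)"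
proof -
  have split: "load s n L' x = (\<Sum>k | k < n \<and> k \<noteq> j \<and> L' k = Some x. s k)
      + (if L' j = Some x then s j else 0)" for L'
  proof -
    have "{k. k < n \<and> L' k = Some x}
        = {k. k < n \<and> k \<noteq> j \<and> L' k = Some x} \<union> (if L' j = Some x then {j} else {})"
      using assms by auto
    then show ?thesis
      by (simp add: load_def)
  qed
  have "{k. k < n \<and> k \<noteq> j \<and> (L(j := v)) k = Some x} = {k. k < n \<and> k \<noteq> j \<and> L k = Some x}"
    by auto
  then show ?thesis
    using split[of L] split[of "L(j := v)"] by simp
qed

lemma load_fun_upd_other:
  "j < n \<Longrightarrow> L j \<noteq> Some x \<Longrightarrow> v \<noteq> Some x \<Longrightarrow> load s n (L(j := v)) x = load s n L x"
  by (simp add: load_fun_upd)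

lemma isopen_fun_upd_other:
  "L j \<noteq> Some x \<Longrightarrow> v \<noteq> Some x \<Longrightarrow> isopen n (L(j := v)) x = isopen n L x"
  unfolding isopen_def by (metis fun_upd_other fun_upd_same)

lemma isopen_fun_upd_keep: "isopen n L x \<Longrightarrow> L j \<noteq> Some x \<Longrightarrow> isopen n (L(j := v)) x"
  unfolding isopen_def by (metis fun_upd_other)

lemma isopen_fun_upd_same: "j < n \<Longrightarrow> isopen n (L(j := Some x)) x"
  unfolding isopen_def by auto

lemma item_class_bounds:
  assumes "item_class x c"
  shows "0 < x" "1 / 2 ^ Suc c < x" "2 ^ c * x \<le> 1"
proof -
  show "1 / 2 ^ Suc c < x" "2 ^ c * x \<le> 1"
    using assms by (auto simp: item_class_def field_simps)
  then show "0 < x"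
    by (smt (verit) divide_pos_pos zero_less_power)
qed

lemma fpar_ge_half: "1/2 \<le> fpar c"
proof (cases "c = 0")
  case False
  then have "(2::real) \<le> 2 ^ c"
    using power_increasing[of 1 c "2::real"] by simp
  then show ?thesis
    using False by (simp add: fpar_def field_simps)
qed (simp add: fpar_def)

section \<open>The potential and the placement invariant\<close>

definition bin_potential ::
  "(nat \<Rightarrow> real) \<Rightarrow> nat \<Rightarrow> (nat \<Rightarrow> binfo) \<Rightarrow> (nat \<Rightarrow> nat option) \<Rightarrow> nat \<Rightarrow> real" where
  "bin_potential s n B L x = (case B x of
      Inst c l \<Rightarrow> if l = Good \<and> isopen n L x then max 0 (2 ^ c * (fpar c - load s n L x)) else 0
    | _ \<Rightarrow> 0)"

definition potential ::
  "(nat \<Rightarrow> real) \<Rightarrow> nat \<Rightarrow> (nat \<Rightarrow> binfo) \<Rightarrow> (nat \<Rightarrow> nat option) \<Rightarrow> real" where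
  "potential s n B L = (\<Sum>x | isopen n L x. bin_potential s n B L x)"

lemma bin_potential_nonneg: "0 \<le> bin_potential s n B L x"
  by (simp add: bin_potential_def split: binfo.split)

lemma bin_potential_Good:
  "B x = Inst c Good \<Longrightarrow> isopen n L x \<Longrightarrow>
    bin_potential s n B L x = max 0 (2 ^ c * (fpar c - load s n L x))"
  by (simp add: bin_potential_def)

lemma bin_potential_Bad: "B x = Inst c Bad \<Longrightarrow> bin_potential s n B L x = 0"
  by (simp add: bin_potential_def)

lemma bin_potential_Junk: "B x = Junk \<Longrightarrow> bin_potential s n B L x = 0"
  by (simp add: bin_potential_def)

lemma bin_potential_not_open: "\<not> isopen n L x \<Longrightarrow> bin_potential s n B L x = 0"
  by (simp add: bin_potential_def split: binfo.split)

lemma bin_potential_full: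
  "B x = Inst c Good \<Longrightarrow> fpar c \<le> load s n L x \<Longrightarrow> bin_potential s n B L x = 0"
  by (simp add: bin_potential_def mult_nonneg_nonpos)

lemma bin_potential_relabelled:
  "B x = Inst c (if fpar c \<le> load s n L x then Good else Bad) \<Longrightarrow> bin_potential s n B L x = 0"
  by (cases "fpar c \<le> load s n L x") (simp_all add: bin_potential_full bin_potential_Bad)

lemma bin_potential_load_mono:
  assumes "B x = Inst c Good" "isopen n L x" "load s n L x \<le> load s n L' x"
  shows "bin_potential s n B L' x \<le> bin_potential s n B L x"
proof -
  have "2 ^ c * (fpar c - load s n L' x) \<le> 2 ^ c * (fpar c - load s n L x)"
    using assms(3) by (intro mult_left_mono) auto
  then have "max 0 (2 ^ c * (fpar c - load s n L' x)) \<le> max 0 (2 ^ c * (fpar c - load s n L x))"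
    by (rule max.mono[OF order_refl])
  then show ?thesis
    using assms by (auto simp: bin_potential_def)
qed

lemma bin_potential_fun_upd_other:
  assumes "j < n" "L j \<noteq> Some x" "v \<noteq> Some x" "B' x = B x"
  shows "bin_potential s n B' (L(j := v)) x = bin_potential s n B L x"
  using assms
  by (simp add: bin_potential_def load_fun_upd_other isopen_fun_upd_other split: binfo.split)

lemma bin_potential_remove_le:
  assumes "j < n" "L j = Some x" "\<And>c l. B x = Inst c l \<Longrightarrow> item_class (s j) c"
  shows "bin_potential s n B (L(j := None)) x \<le> bin_potential s n B L x + 1"
proof (cases "\<exists>c. B x = Inst c Good \<and> isopen n (L(j := None)) x")
  case True
  then obtain c where c: "B x = Inst c Good" "isopen n (L(j := None)) x"
    by blast
  have "load s n (L(j := None)) x = load s n L x - s j"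
    using assms(1,2) by (simp add: load_fun_upd)
  then have "2 ^ c * (fpar c - load s n (L(j := None)) x) = 2 ^ c * (fpar c - load s n L x) + 2 ^ c * s j"
    by (simp add: right_diff_distrib distrib_left)
  moreover have "isopen n L x"
    using assms(1,2) by (auto simp: isopen_def)
  ultimately show ?thesis
    using c item_class_bounds(3)[OF assms(3)[OF c(1)]] by (simp add: bin_potential_def)
next
  case False
  then have "bin_potential s n B (L(j := None)) x = 0"
    by (auto simp: bin_potential_def split: binfo.split)
  then show ?thesis
    using bin_potential_nonneg[of s n B L x] by simp
qed

lemma potential_nonneg: "0 \<le> potential s n B L"
  unfolding potential_def by (simp add: sum_nonneg bin_potential_nonneg)

lemma potential_eq_sum_superset:
  "finite W \<Longrightarrow> {x. isopen n L x} \<subseteq> W \<Longrightarrow> potential s n B L = (\<Sum>x\<in>W. bin_potential s n B L x)"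
  unfolding potential_def by (rule sum.mono_neutral_left) (auto simp: bin_potential_not_open)

lemma potential_mono_except:
  assumes "\<And>x. x \<noteq> b \<Longrightarrow> bin_potential s n B' L' x \<le> bin_potential s n B L x"
  shows "potential s n B' L' - bin_potential s n B' L' b \<le> potential s n B L - bin_potential s n B L b"
proof -
  define W where "W = {x. isopen n L x} \<union> {x. isopen n L' x} \<union> {b}"
  have W: "finite W" "b \<in> W"
    unfolding W_def using finite_open_bins by auto
  have split: "potential s n B'' L'' = bin_potential s n B'' L'' b + (\<Sum>x\<in>W - {b}. bin_potential s n B'' L'' x)"
    if "{x. isopen n L'' x} \<subseteq> W" for B'' L''
    using potential_eq_sum_superset[OF W(1) that] sum.remove[OF W] by simp
  have "potential s n B L = bin_potential s n B L b + (\<Sum>x\<in>W - {b}. bin_potential s n B L x)"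
    "potential s n B' L' = bin_potential s n B' L' b + (\<Sum>x\<in>W - {b}. bin_potential s n B' L' x)"
    by (rule split, force simp: W_def)+
  moreover have "(\<Sum>x\<in>W - {b}. bin_potential s n B' L' x) \<le> (\<Sum>x\<in>W - {b}. bin_potential s n B L x)"
    using assms by (intro sum_mono) auto
  ultimately show ?thesis
    by linarith
qed

lemma potential_mono:
  assumes "\<And>x. bin_potential s n B' L' x \<le> bin_potential s n B L x"
  shows "potential s n B' L' \<le> potential s n B L"
  using potential_mono_except[where b = 0, OF assms] assms[of 0] by linarith

definition consistent :: "(nat \<Rightarrow> real) \<Rightarrow> nat \<Rightarrow> (nat \<Rightarrow> binfo) \<Rightarrow> (nat \<Rightarrow> nat option) \<Rightarrow> bool" where
  "consistent s n B L \<longleftrightarrow> (\<forall>j x. L j = Some x \<longrightarrow>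
      j < n \<and> B x \<noteq> Unused \<and> (\<forall>c l. B x = Inst c l \<longrightarrow> item_class (s j) c))"

lemma consistentD:
  assumes "consistent s n B L" "L j = Some x"
  shows "j < n" "B x \<noteq> Unused" "B x = Inst c l \<Longrightarrow> item_class (s j) c"
  using assms unfolding consistent_def by auto

lemma consistent_Unused_not_open: "consistent s n B L \<Longrightarrow> B x = Unused \<Longrightarrow> \<not> isopen n L x"
  unfolding consistent_def isopen_def by auto

lemma consistent_remove: "consistent s n B L \<Longrightarrow> consistent s n B (L(j := None))"
  unfolding consistent_def by auto

lemma consistent_place:
  assumes "consistent s n B L" "j < n" "item_class (s j) c"
    "B b = Unused \<or> (\<exists>l. B b = Inst c l)" "B' b = Inst c l'" "\<And>x. x \<noteq> b \<Longrightarrow> B' x = B x"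
  shows "consistent s n B' (L(j := Some b))"
  unfolding consistent_def
proof (intro allI impI)
  fix k x
  assume k: "(L(j := Some b)) k = Some x"
  show "k < n \<and> B' x \<noteq> Unused \<and> (\<forall>c l. B' x = Inst c l \<longrightarrow> item_class (s k) c)"
  proof (cases "k = j")
    case False
    then have "L k = Some x"
      using k by simp
    then show ?thesis
      using assms consistentD[OF assms(1)] by (cases "x = b") fastforce+
  qed (use k assms in auto)
qed

lemma bin_potential_place_other:
  assumes "bin_potential s n B' (L(j := Some b)) b \<le> bin_potential s n B L b"
    "\<And>x. x \<noteq> b \<Longrightarrow> B' x = B x" "j < n" "L j \<noteq> Some x"
  shows "bin_potential s n B' (L(j := Some b)) x \<le> bin_potential s n B L x"
  using assms bin_potential_fun_upd_other[of j n L x "Some b" B' B s] by (cases "x = b") auto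

section \<open>FirstFit migration\<close>

lemma firstfit_other_bins:
  assumes "firstfit f c s n ord js B L B2 L2" "B x \<noteq> Unused" "x \<notin> set ord"
  shows "B2 x = B x"
  using assms by (induction rule: firstfit.induct) auto

lemma firstfit_loc_other:
  assumes "firstfit f c s n ord js B L B2 L2" "j \<notin> set js"
  shows "L2 j = L j"
  using assms by (induction rule: firstfit.induct) auto

lemma firstfit_moves_out:
  assumes "firstfit f c s n ord js B L B2 L2" "distinct js" "b \<notin> set ord" "B b \<noteq> Unused"
    "j \<in> set js"
  shows "L2 j \<noteq> Some b"
  using assms
proof (induction rule: firstfit.induct)
  case (ff_fit ord pre b' post L j' L' B' B js B'' L'')
  then show ?case
    using firstfit_loc_other[OF ff_fit.hyps(6)] by auto
next
  case (ff_new ord L j' B b' L' B' js B'' L'')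
  then show ?case
    using firstfit_loc_other[OF ff_new.hyps(5)] by auto
qed simp

lemma firstfit_empties_bin:
  assumes "firstfit f c s n ord js B L B2 L2" "distinct js" "set js = {j. j < n \<and> L j = Some b}"
    "b \<notin> set ord" "B b \<noteq> Unused"
  shows "\<not> isopen n L2 b"
proof
  assume "isopen n L2 b"
  then obtain k where "k < n" "L2 k = Some b"
    unfolding isopen_def by blast
  then show False
    using firstfit_moves_out[OF assms(1,2,4,5)] firstfit_loc_other[OF assms(1)] assms(3) by fastforce
qed

lemma firstfit_fit_step:
  assumes "consistent s n B L" "L j = Some b" "item_class (s j) c"
    "B b' = Inst c l" "isopen n L b'" "b' \<noteq> b" "L' = L(j := Some b')"
    "B' = B(b' := (if B b' = Inst c Bad \<and> fpar c \<le> load s n L' b' then Inst c Good else B b'))"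
  shows "consistent s n B' L' \<and> (\<forall>x. x \<noteq> b \<longrightarrow> bin_potential s n B' L' x \<le> bin_potential s n B L x)"
proof -
  have "j < n"
    using consistentD(1)[OF assms(1,2)] .
  have B'_other: "B' x = B x" if "x \<noteq> b'" for x
    using assms(8) that by simp
  have pot_b': "bin_potential s n B' L' b' \<le> bin_potential s n B L b'"
  proof (cases l)
    case Good
    have "load s n L' b' = load s n L b' + s j"
      using assms(2,6,7) \<open>j < n\<close> by (simp add: load_fun_upd)
    moreover have "B' = B"
      using assms(4,8) Good by (simp add: fun_upd_idem_iff)
    ultimately show ?thesis
      using assms(4,5) Good item_class_bounds(1)[OF assms(3)] by (simp add: bin_potential_load_mono)
  next
    case Bad
    then have "B' b' = Inst c (if fpar c \<le> load s n L' b' then Good else Bad)"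
      using assms(4,8) by simp
    then show ?thesis
      using bin_potential_nonneg[of s n B L b'] by (simp add: bin_potential_relabelled)
  qed
  obtain l' where l': "B' b' = Inst c l'"
    using assms(4,8) by (cases "l = Bad \<and> fpar c \<le> load s n L' b'") auto
  have "consistent s n B' L'"
    unfolding assms(7)
    by (rule consistent_place[OF assms(1) \<open>j < n\<close> assms(3) _ l' B'_other]) (use assms(4) in auto)
  moreover have "bin_potential s n B' L' x \<le> bin_potential s n B L x" if "x \<noteq> b" for x
    using pot_b' unfolding assms(7)
    by (rule bin_potential_place_other[OF _ B'_other \<open>j < n\<close>]) (use that assms(2) in auto)
  ultimately show ?thesis
    by blast
qed

lemma firstfit_new_step:
  assumes "consistent s n B L" "L j = Some b" "item_class (s j) c" "B b' = Unused"
    "L' = L(j := Some b')" "B' = B(b' := Inst c (if fpar c \<le> s j then Good else Bad))"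
  shows "consistent s n B' L' \<and> (\<forall>x. x \<noteq> b \<longrightarrow> bin_potential s n B' L' x \<le> bin_potential s n B L x)"
proof -
  have "j < n" "b' \<noteq> b"
    using consistentD(1,2)[OF assms(1,2)] assms(4) by auto
  have B'_other: "B' x = B x" if "x \<noteq> b'" for x
    using assms(6) that by simp
  have "load s n L' b' = s j"
    using assms(2,5) \<open>j < n\<close> \<open>b' \<noteq> b\<close>
      load_not_open[OF consistent_Unused_not_open[OF assms(1,4)]]
    by (simp add: load_fun_upd)
  then have pot_b': "bin_potential s n B' L' b' \<le> bin_potential s n B L b'"
    using assms(6) bin_potential_nonneg[of s n B L b'] by (simp add: bin_potential_relabelled)
  have "consistent s n B' L'"
    unfolding assms(5)
    by (rule consistent_place[OF assms(1) \<open>j < n\<close> assms(3) _ _ B'_other]) (use assms(4,6) in auto)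
  moreover have "bin_potential s n B' L' x \<le> bin_potential s n B L x" if "x \<noteq> b" for x
    using pot_b' unfolding assms(5)
    by (rule bin_potential_place_other[OF _ B'_other \<open>j < n\<close>]) (use that assms(2) in auto)
  ultimately show ?thesis
    by blast
qed

lemma firstfit_potential:
  assumes "firstfit (fpar c) c s n ord js B L B2 L2" "consistent s n B L" "distinct js"
    "\<forall>j\<in>set js. L j = Some b \<and> item_class (s j) c" "b \<notin> set ord"
    "\<forall>x\<in>set ord. isopen n L x \<and> (\<exists>l. B x = Inst c l)"
  shows "consistent s n B2 L2 \<and> (\<forall>x. x \<noteq> b \<longrightarrow> bin_potential s n B2 L2 x \<le> bin_potential s n B L x)"
  using assms(1-6)
proof (induction rule: firstfit.induct)
  case (ff_done ord B L)
  then show ?case by simp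
next
  case (ff_fit ord pre b' post L j L' B' B js B'' L'')
  have j: "L j = Some b" "item_class (s j) c" "j \<notin> set js"
    using ff_fit.prems by auto
  have "b' \<in> set ord"
    using ff_fit.hyps(1) by simp
  then obtain l where "B b' = Inst c l" "isopen n L b'" "b' \<noteq> b"
    using ff_fit.prems(4,5) by blast
  then have step: "consistent s n B' L' \<and>
      (\<forall>x. x \<noteq> b \<longrightarrow> bin_potential s n B' L' x \<le> bin_potential s n B L x)"
    by (rule firstfit_fit_step[OF ff_fit.prems(1) j(1,2) _ _ _ ff_fit.hyps(4,5)])
  have "\<forall>x\<in>set ord. isopen n L' x \<and> (\<exists>l. B' x = Inst c l)"
    using ff_fit.prems(4,5) ff_fit.hyps(4,5) j(1) by (auto intro: isopen_fun_upd_keep)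
  moreover have "\<forall>j'\<in>set js. L' j' = Some b \<and> item_class (s j') c"
    using ff_fit.prems(3) ff_fit.hyps(4) j(3) by auto
  ultimately have "consistent s n B'' L'' \<and>
      (\<forall>x. x \<noteq> b \<longrightarrow> bin_potential s n B'' L'' x \<le> bin_potential s n B' L' x)"
    using ff_fit.IH step ff_fit.prems(2,4) by simp
  then show ?case
    using step order_trans by blast
next
  case (ff_new ord L j B b' L' B' js B'' L'')
  have j: "L j = Some b" "item_class (s j) c" "j \<notin> set js"
    using ff_new.prems by auto
  have step: "consistent s n B' L' \<and>
      (\<forall>x. x \<noteq> b \<longrightarrow> bin_potential s n B' L' x \<le> bin_potential s n B L x)"
    by (rule firstfit_new_step[OF ff_new.prems(1) j(1,2) ff_new.hyps(2-4)])
  have "b' \<noteq> b"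
    using consistentD(2)[OF ff_new.prems(1) j(1)] ff_new.hyps(2) by auto
  have "\<forall>x\<in>set (ord @ [b']). isopen n L' x \<and> (\<exists>l. B' x = Inst c l)"
    using ff_new.prems(4,5) ff_new.hyps(3,4) j(1) consistentD(1)[OF ff_new.prems(1) j(1)]
    by (auto intro: isopen_fun_upd_keep isopen_fun_upd_same)
  moreover have "\<forall>j'\<in>set js. L' j' = Some b \<and> item_class (s j') c"
    using ff_new.prems(3) ff_new.hyps(3) j(3) by auto
  ultimately have "consistent s n B'' L'' \<and>
      (\<forall>x. x \<noteq> b \<longrightarrow> bin_potential s n B'' L'' x \<le> bin_potential s n B' L' x)"
    using ff_new.IH step ff_new.prems(2,4) \<open>b' \<noteq> b\<close> by simp
  then show ?case
    using step order_trans by blast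
qed

section \<open>Algorithm 1\<close>

lemma alg1_arrive_potential:
  assumes "alg1_arrive (fpar c) c s n B L i B' L'" "consistent s n B L" "L i = None" "i < n"
    "item_class (s i) c"
  shows "consistent s n B' L' \<and> potential s n B' L' \<le> potential s n B L \<and> (B x = Junk \<longrightarrow> B' x = Junk)"
proof -
  have place: ?thesis
    if L': "L' = L(i := Some b)" and B': "B' b = Inst c l'" "\<And>x. x \<noteq> b \<Longrightarrow> B' x = B x"
      and "B b = Unused \<or> (\<exists>l. B b = Inst c l)"
      and pot_b: "bin_potential s n B' L' b \<le> bin_potential s n B L b" for b l'
  proof (intro conjI)
    show "consistent s n B' L'"
      unfolding L' by (rule consistent_place[OF assms(2,4,5) that(4) B'])
    show "potential s n B' L' \<le> potential s n B L"
      using pot_b unfolding L'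
      by (auto intro!: potential_mono bin_potential_place_other[OF _ B'(2) assms(4)] simp: assms(3))
    show "B x = Junk \<longrightarrow> B' x = Junk"
      using that(4) B' by (cases "x = b") auto
  qed
  show ?thesis
    using assms(1)
  proof cases
    case (to_bad b)
    then show ?thesis
      by (intro place[of b "if fpar c \<le> load s n L' b then Good else Bad"])
        (auto simp: bin_potential_relabelled bin_potential_nonneg)
  next
    case (to_good b)
    have "load s n L b \<le> load s n L' b"
      using to_good assms(3,4) item_class_bounds(1)[OF assms(5)] by (simp add: load_fun_upd)
    with to_good show ?thesis
      by (intro place[of b Good]) (auto simp: bin_potential_load_mono)
  next
    case (to_new b)
    have "load s n L' b = s i"
      using to_new assms(3,4) load_not_open[OF consistent_Unused_not_open[OF assms(2)]]
      by (simp add: load_fun_upd)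
    with to_new show ?thesis
      by (intro place[of b "if fpar c \<le> s i then Good else Bad"])
        (auto simp: bin_potential_relabelled bin_potential_nonneg)
  qed
qed

lemma potential_remove_le:
  assumes "consistent s n B L" "L i = Some b"
  shows "potential s n B (L(i := None)) \<le> potential s n B L + 1"
proof -
  have "i < n"
    using consistentD(1)[OF assms] .
  have "potential s n B (L(i := None)) - bin_potential s n B (L(i := None)) b
      \<le> potential s n B L - bin_potential s n B L b"
    using assms(2) by (intro potential_mono_except) (simp add: bin_potential_fun_upd_other[OF \<open>i < n\<close>])
  moreover have "bin_potential s n B (L(i := None)) b \<le> bin_potential s n B L b + 1"
    using consistentD(3)[OF assms] by (intro bin_potential_remove_le[where L = L, OF \<open>i < n\<close> assms(2)])
  ultimately show ?thesis
    by linarith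
qed

lemma length_le_load:
  assumes "distinct js" "set js = {j. j < n \<and> L j = Some x}" "\<forall>j\<in>set js. item_class (s j) c"
  shows "real (length js) \<le> 2 * 2 ^ c * load s n L x"
proof -
  have "real (length js) / 2 ^ Suc c = (\<Sum>j\<in>set js. 1 / 2 ^ Suc c)"
    using distinct_card[OF assms(1)] by simp
  also have "\<dots> \<le> (\<Sum>j\<in>set js. s j)"
    using assms(3) item_class_bounds(2) by (intro sum_mono less_imp_le) blast
  also have "\<dots> = load s n L x"
    unfolding load_def assms(2) ..
  finally show ?thesis
    by (simp add: field_simps)
qed

definition migration_factor :: "real \<Rightarrow> real" where
  "migration_factor \<alpha> = 4 * \<alpha> / (1 - 2 * \<alpha>)"

lemma migration_factor_nonneg: "0 < \<alpha> \<Longrightarrow> \<alpha> < 1/2 \<Longrightarrow> 0 \<le> migration_factor \<alpha>"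
  by (simp add: migration_factor_def)

text \<open>The arithmetic core of the amortization: a bin of class \<open>c\<close> (\<open>x = 2\<^sup>c\<close>) whose load \<open>l\<close>
  fell below \<open>\<alpha>\<close> holds at most \<open>2 x l\<close> items, and its potential \<open>p\<close> just before the last
  departure (of size \<open>t\<close>) pays for them.\<close>

lemma migrations_le_potential:
  fixes \<alpha> x f l t p m :: real
  assumes "0 < \<alpha>" "\<alpha> < 1/2" "0 < x" "x * t \<le> 1" "1/2 \<le> f" "l < \<alpha>" "m \<le> 2 * x * l"
    "x * (f - l - t) \<le> p"
  shows "m \<le> migration_factor \<alpha> * (1 + p)"
proof -
  have "m \<le> 2 * x * \<alpha>"
    using assms(3,6,7) by (smt (verit) mult_strict_left_mono)
  also have "\<dots> = migration_factor \<alpha> * (x * (1/2 - \<alpha>))"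
    using assms(2) by (simp add: migration_factor_def field_simps)
  also have "\<dots> \<le> migration_factor \<alpha> * (1 + p)"
  proof (rule mult_left_mono)
    have "x * (1/2 - \<alpha>) \<le> x * (f - l)"
      using assms(3,5,6) by (intro mult_left_mono) auto
    then show "x * (1/2 - \<alpha>) \<le> 1 + p"
      using assms(4,8) by (simp add: right_diff_distrib)
  qed (use assms(1,2) migration_factor_nonneg in auto)
  finally show ?thesis .
qed

lemma migration_amortized:
  assumes "consistent s n B L" "L i = Some b" "B b = Inst c Good"
    and L1: "L1 = L(i := None)" "load s n L1 b < \<alpha>"
    and js: "distinct js" "set js = {j. j < n \<and> L1 j = Some b}"
    and ff: "firstfit (fpar c) c s n ord js B L1 B' L'"
      "\<forall>x\<in>set ord. x \<noteq> b \<and> isopen n L1 x \<and> (\<exists>l. B x = Inst c l)"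
    and "0 < \<alpha>" "\<alpha> < 1/2"
  shows "consistent s n B' L' \<and>
      real (length js) + migration_factor \<alpha> * potential s n B' L'
        \<le> migration_factor \<alpha> * (potential s n B L + 1) \<and>
      (B x = Junk \<longrightarrow> B' x = Junk)"
proof -
  have "i < n" "item_class (s i) c"
    using consistentD[OF assms(1,2)] assms(3) by auto
  have "consistent s n B L1"
    unfolding L1 by (rule consistent_remove[OF assms(1)])
  then have js_class: "\<forall>j\<in>set js. L1 j = Some b \<and> item_class (s j) c"
    using js(2) consistentD(3) assms(3) by blast
  have "consistent s n B' L' \<and> (\<forall>x. x \<noteq> b \<longrightarrow> bin_potential s n B' L' x \<le> bin_potential s n B L1 x)"
    using ff by (intro firstfit_potential[OF ff(1) \<open>consistent s n B L1\<close> js(1) js_class]) auto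
  moreover have "bin_potential s n B L1 x = bin_potential s n B L x" if "x \<noteq> b" for x
    unfolding L1 using bin_potential_fun_upd_other[OF \<open>i < n\<close>] assms(2) that by simp
  ultimately have B': "consistent s n B' L'"
    and pot_other: "\<And>x. x \<noteq> b \<Longrightarrow> bin_potential s n B' L' x \<le> bin_potential s n B L x"
    by auto
  have "\<not> isopen n L' b"
    using firstfit_empties_bin[OF ff(1) js] assms(3) ff(2) by auto
  then have "potential s n B' L' \<le> potential s n B L - bin_potential s n B L b"
    using potential_mono_except[where b = b, OF pot_other] by (simp add: bin_potential_not_open)
  moreover have "real (length js) \<le> migration_factor \<alpha> * (1 + bin_potential s n B L b)"
  proof (rule migrations_le_potential)
    show "real (length js) \<le> 2 * 2 ^ c * load s n L1 b"
      using length_le_load[OF js] js_class by blast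
    have "isopen n L b"
      using \<open>i < n\<close> assms(2) by (auto simp: isopen_def)
    moreover have "load s n L b = load s n L1 b + s i"
      unfolding L1 using \<open>i < n\<close> assms(2) by (simp add: load_fun_upd)
    ultimately show "2 ^ c * (fpar c - load s n L1 b - s i) \<le> bin_potential s n B L b"
      using assms(3) by (simp add: bin_potential_Good diff_diff_eq)
  qed (use assms(10,11) L1(2) item_class_bounds(3)[OF \<open>item_class (s i) c\<close>] fpar_ge_half in auto)
  moreover have "B x = Junk \<longrightarrow> B' x = Junk"
    using firstfit_other_bins[OF ff(1), of x] ff(2) by force
  moreover have "0 \<le> migration_factor \<alpha>"
    using assms(10,11) by (rule migration_factor_nonneg)
  ultimately show ?thesis
    using B' by (smt (verit) distrib_left mult_left_mono)
qed

lemma alg1_depart_amortized: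
  assumes "alg1_depart \<alpha> (fpar c) c s n B L i B' L' m" "consistent s n B L" "L i = Some b"
    "0 < \<alpha>" "\<alpha> < 1/2"
  shows "consistent s n B' L' \<and>
      real m + migration_factor \<alpha> * potential s n B' L' \<le> migration_factor \<alpha> * (potential s n B L + 1) \<and>
      (B x = Junk \<longrightarrow> B' x = Junk)"
  using assms(1)
proof cases
  case dep_plain
  then show ?thesis
    using potential_remove_le[OF assms(2,3)] consistent_remove[OF assms(2)]
      migration_factor_nonneg[OF assms(4,5)] by (simp add: mult_left_mono)
next
  case (dep_migrate b' L1 bads goods js)
  then have "b' = b"
    using assms(3) by simp
  with dep_migrate have mig: "B b = Inst c Good" "load s n L1 b < \<alpha>" "set js = {j. j < n \<and> L1 j = Some b}"
    "\<forall>x\<in>set (bads @ goods). x \<noteq> b \<and> isopen n L1 x \<and> (\<exists>l. B x = Inst c l)"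
    by auto
  show ?thesis
    unfolding \<open>m = length js\<close>
    by (rule migration_amortized[OF assms(2,3) mig(1) \<open>L1 = L(i := None)\<close> mig(2)
          \<open>distinct js\<close> mig(3) \<open>firstfit (fpar c) c s n (bads @ goods) js B L1 B' L'\<close> mig(4) assms(4,5)])
qed

section \<open>Algorithm 2\<close>

definition alg2_inv :: "(nat \<Rightarrow> real) \<Rightarrow> nat \<Rightarrow> state \<Rightarrow> bool" where
  "alg2_inv s n \<sigma> \<longleftrightarrow> consistent s n (bins \<sigma>) (loc \<sigma>) \<and> bins \<sigma> (junkb \<sigma>) = Junk"

definition amortized :: "real \<Rightarrow> (nat \<Rightarrow> real) \<Rightarrow> nat \<Rightarrow> state \<Rightarrow> real" where
  "amortized \<alpha> s n \<sigma> = real (migs \<sigma>) + migration_factor \<alpha> * potential s n (bins \<sigma>) (loc \<sigma>)"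

primrec is_departure :: "event \<Rightarrow> bool" where
  "is_departure (Arr i) = False"
| "is_departure (Dep i) = True"

lemma amortized_mono:
  assumes "migs \<sigma>' = migs \<sigma>"
    "potential s n (bins \<sigma>') (loc \<sigma>') \<le> potential s n (bins \<sigma>) (loc \<sigma>)" "0 < \<alpha>" "\<alpha> < 1/2"
  shows "amortized \<alpha> s n \<sigma>' \<le> amortized \<alpha> s n \<sigma>"
  using assms mult_left_mono[OF assms(2) migration_factor_nonneg[OF assms(3,4)]]
  by (simp add: amortized_def)

lemma guess_upd_amortized:
  assumes "guess_upd n \<sigma> \<sigma>'" "alg2_inv s n \<sigma>"
  shows "alg2_inv s n \<sigma>' \<and> loc \<sigma>' = loc \<sigma> \<and> amortized \<alpha> s n \<sigma>' = amortized \<alpha> s n \<sigma>"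
  using assms(1)
proof cases
  case (double jb)
  have "bin_potential s n ((bins \<sigma>)(jb := Junk)) (loc \<sigma>) x = bin_potential s n (bins \<sigma>) (loc \<sigma>) x" for x
    using double(3) by (simp add: bin_potential_def)
  then show ?thesis
    using double assms(2) by (auto simp: alg2_inv_def amortized_def potential_def consistent_def)
qed (use assms(2) in simp)

lemma alg2_step_amortized:
  assumes "alg2_step \<alpha> s n \<sigma> e \<sigma>'" "alg2_inv s n \<sigma>" "0 < \<alpha>" "\<alpha> < 1/2"
  shows "alg2_inv s n \<sigma>' \<and>
    amortized \<alpha> s n \<sigma>' \<le> amortized \<alpha> s n \<sigma> + (if is_departure e then migration_factor \<alpha> else 0)"
  using assms(1)
proof cases
  case (arr_inst i \<sigma>1 c B' L')
  have \<sigma>1: "alg2_inv s n \<sigma>1" "loc \<sigma>1 = loc \<sigma>" "amortized \<alpha> s n \<sigma>1 = amortized \<alpha> s n \<sigma>"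
    using guess_upd_amortized[OF arr_inst(5) assms(2)] by auto
  have "consistent s n B' L' \<and> potential s n B' L' \<le> potential s n (bins \<sigma>1) (loc \<sigma>1) \<and>
      (bins \<sigma>1 (junkb \<sigma>1) = Junk \<longrightarrow> B' (junkb \<sigma>1) = Junk)"
    using \<sigma>1 arr_inst by (intro alg1_arrive_potential) (auto simp: alg2_inv_def)
  moreover from this have "amortized \<alpha> s n \<sigma>' \<le> amortized \<alpha> s n \<sigma>1"
    using arr_inst(2) assms(3,4) by (intro amortized_mono) auto
  ultimately show ?thesis
    using \<sigma>1 arr_inst(1,2) by (simp add: alg2_inv_def)
next
  case (arr_junk i \<sigma>1)
  have \<sigma>1: "alg2_inv s n \<sigma>1" "loc \<sigma>1 = loc \<sigma>" "amortized \<alpha> s n \<sigma>1 = amortized \<alpha> s n \<sigma>"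
    using guess_upd_amortized[OF arr_junk(5) assms(2)] by auto
  let ?L' = "(loc \<sigma>1)(i := Some (junkb \<sigma>1))"
  have "consistent s n (bins \<sigma>1) ?L'"
    using \<sigma>1(1) arr_junk(3) by (auto simp: alg2_inv_def consistent_def)
  moreover have "bin_potential s n (bins \<sigma>1) ?L' x \<le> bin_potential s n (bins \<sigma>1) (loc \<sigma>1) x" for x
    by (rule bin_potential_place_other)
      (use \<sigma>1(1,2) arr_junk(3,4) in \<open>auto simp: alg2_inv_def bin_potential_Junk\<close>)
  then have "potential s n (bins \<sigma>1) ?L' \<le> potential s n (bins \<sigma>1) (loc \<sigma>1)"
    by (rule potential_mono)
  moreover from this have "amortized \<alpha> s n \<sigma>' \<le> amortized \<alpha> s n \<sigma>1"
    using arr_junk(2) assms(3,4) by (intro amortized_mono) auto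
  ultimately show ?thesis
    using \<sigma>1 arr_junk(1,2) by (simp add: alg2_inv_def)
next
  case (dep_inst i b c l B' L' m)
  have "consistent s n B' L' \<and>
      real m + migration_factor \<alpha> * potential s n B' L'
        \<le> migration_factor \<alpha> * (potential s n (bins \<sigma>) (loc \<sigma>) + 1) \<and>
      (bins \<sigma> (junkb \<sigma>) = Junk \<longrightarrow> B' (junkb \<sigma>) = Junk)"
    using assms dep_inst by (intro alg1_depart_amortized) (auto simp: alg2_inv_def)
  then show ?thesis
    using dep_inst assms(2) by (auto simp: alg2_inv_def amortized_def distrib_left)
next
  case (dep_junk i b)
  have "potential s n (bins \<sigma>) ((loc \<sigma>)(i := None)) \<le> potential s n (bins \<sigma>) (loc \<sigma>) + 1"
    using assms(2) dep_junk(3) by (intro potential_remove_le) (auto simp: alg2_inv_def)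
  then have "migration_factor \<alpha> * potential s n (bins \<sigma>) ((loc \<sigma>)(i := None))
      \<le> migration_factor \<alpha> * (potential s n (bins \<sigma>) (loc \<sigma>) + 1)"
    using migration_factor_nonneg[OF assms(3,4)] by (rule mult_left_mono)
  then show ?thesis
    using dep_junk assms(2) consistent_remove by (auto simp: alg2_inv_def amortized_def distrib_left)
qed

lemma alg2_run_amortized:
  assumes "alg2_run \<alpha> s n \<sigma> es \<sigma>'" "alg2_inv s n \<sigma>" "0 < \<alpha>" "\<alpha> < 1/2"
  shows "amortized \<alpha> s n \<sigma>' \<le> amortized \<alpha> s n \<sigma> + migration_factor \<alpha> * length (filter is_departure es)"
  using assms(1,2)
proof (induction rule: alg2_run.induct)
  case (run_cons \<sigma> e \<sigma>1 es \<sigma>2)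
  then show ?case
    using alg2_step_amortized[OF run_cons(1,4) assms(3,4)] by (auto simp: algebra_simps)
qed simp

lemma length_departures_le:
  assumes "distinct evs" "set evs \<subseteq> Arr ` {..<n} \<union> Dep ` {..<n}"
  shows "length (filter is_departure evs) \<le> n"
proof -
  have "length (filter is_departure evs) = card (set (filter is_departure evs))"
    using distinct_card[of "filter is_departure evs"] assms(1) by simp
  also have "\<dots> \<le> card (Dep ` {..<n})"
    using assms(2) by (intro card_mono) auto
  also have "\<dots> \<le> n"
    using card_image_le[of "{..<n}" Dep] by simp
  finally show ?thesis .
qed

theorem lemma13:
  fixes \<alpha> :: real and n :: nat and a s d :: "nat \<Rightarrow> real"
    and evs :: "event list" and \<sigma> :: state
  assumes "0 < \<alpha>" and "\<alpha> < 1/2"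
    and "\<forall>i<n. 0 \<le> a i \<and> 0 \<le> s i \<and> s i \<le> 1 \<and> 0 < d i"
    and "valid_order n a d evs"
    and "alg2_run \<alpha> s n alg2_init evs \<sigma>"
  shows "real (migs \<sigma>) \<le> 4 * \<alpha> / (1 - 2 * \<alpha>) * real n"
proof -
  have "alg2_inv s n alg2_init" "amortized \<alpha> s n alg2_init = 0"
    by (simp_all add: alg2_inv_def consistent_def amortized_def potential_def isopen_def alg2_init_def)
  have "real (migs \<sigma>) \<le> amortized \<alpha> s n \<sigma>"
    using potential_nonneg migration_factor_nonneg[OF assms(1,2)] by (simp add: amortized_def)
  also have "\<dots> \<le> migration_factor \<alpha> * length (filter is_departure evs)"
    using alg2_run_amortized[OF assms(5) \<open>alg2_inv s n alg2_init\<close> assms(1,2)]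
      \<open>amortized \<alpha> s n alg2_init = 0\<close> by simp
  also have "\<dots> \<le> migration_factor \<alpha> * n"
    using assms(4) migration_factor_nonneg[OF assms(1,2)]
    by (intro mult_left_mono) (auto simp: valid_order_def intro: length_departures_le)
  finally show ?thesis
    unfolding migration_factor_def .
qed

end
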